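(* Let $f:X\to\mathrm{SP}(Y)$ be a based multivalued function and $\Sigma f:=\mathrm{id}_{S^1}\triangle f:\Sigma X\to\mathrm{SP}(\Sigma Y)$. For a based space $Z$ let $s_Z:\widetilde{H}^*(Z)\to\widetilde{H}^{*+1}(\Sigma Z)$ be the suspension isomorphism. Then $(\Sigma f)^*\circ s_Y=s_X\circ f^*$ as maps $\widetilde{H}^*(Y)\to\widetilde{H}^{*+1}(\Sigma X)$.
   Context: $\Sigma X=S^1\wedge X$ is the reduced suspension. For a based space $(X,e)$, $\mathrm{SP}(X)$ is the free unital abelian monoid on $X$ with identity $e$, with inclusion $\iota_X:X\to\mathrm{SP}(X)$; $\mathrm{id}_{S^1}$ is regarded as the multivalued function $\iota_{S^1}:S^1\to\mathrm{SP}(S^1)$. For based multivalued functions $f:A\to\mathrm{SP}(B)$, $g:C\to\mathrm{SP}(D)$, $f\triangle g:A\wedge C\to\mathrm{SP}(B\wedge D)$ sends $(a,c)$ to $\sum_{i,j}(b_i,d_j)$ where $f(a)=\sum_i b_i$, $g(c)=\sum_j d_j$. Identify $\widetilde{H}^n(Y)=[Y,\mathrm{SP}(S^n)]_*$; for $\alpha:Y\to\mathrm{SP}(S^n)$ let $\widetilde\alpha:\mathrm{SP}(Y)\to\mathrm{SP}(S^n)$ be its unique continuous homomorphic extension, and for a based map $f:X\to\mathrm{SP}(Y)$ set $f^*[\alpha]=[\widetilde\alpha\circ f]$. *)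

theory Defs
  imports "HOL-Analysis.Analysis" "HOL-Library.Multiset"
begin

definition final_top :: "'a set \<Rightarrow> ('i \<Rightarrow> 'b topology) \<Rightarrow> ('i \<Rightarrow> 'b \<Rightarrow> 'a) \<Rightarrow> 'a topology" where
  "final_top S T g = topology (\<lambda>U. U \<subseteq> S \<and> (\<forall>k. openin (T k) {x \<in> topspace (T k). g k x \<in> U}))"

text \<open>SP(X): finite formal sums of points of X, with the basepoint e identified with 0.
  Normal form: finite multisets not containing e.\<close>
definition SP_norm :: "'a \<Rightarrow> 'a multiset \<Rightarrow> 'a multiset" where
  "SP_norm e M = filter_mset (\<lambda>y. y \<noteq> e) M"

text \<open>Topology of SP(X) = colimit of X^k / Sigma_k, i.e. final topology w.r.t. all X^k \<rightarrow> SP(X).\<close>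
definition SP_top :: "'a topology \<Rightarrow> 'a \<Rightarrow> 'a multiset topology" where
  "SP_top X e = final_top {M. set_mset M \<subseteq> topspace X - {e}}
      (\<lambda>k. product_topology (\<lambda>_. X) {..<k}) (\<lambda>k x. SP_norm e (mset (map x [0..<k])))"

definition iota :: "'a \<Rightarrow> 'a \<Rightarrow> 'a multiset" where
  "iota e x = (if x = e then {#} else {#x#})"

text \<open>Smash product A \<and> C: pairs away from the wedge, plus the basepoint (eA,eC).\<close>
definition smash_pt :: "'a \<Rightarrow> 'b \<Rightarrow> 'a \<times> 'b \<Rightarrow> 'a \<times> 'b" where
  "smash_pt eA eC p = (if fst p = eA \<or> snd p = eC then (eA, eC) else p)"

definition smash_top :: "'a topology \<Rightarrow> 'a \<Rightarrow> 'b topology \<Rightarrow> 'b \<Rightarrow> ('a \<times> 'b) topology" where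
  "smash_top A eA C eC = final_top
      ({p. fst p \<in> topspace A - {eA} \<and> snd p \<in> topspace C - {eC}} \<union> {(eA, eC)})
      (\<lambda>_::unit. prod_topology A C) (\<lambda>_ p. smash_pt eA eC p)"

text \<open>The sphere S^n = I^n / boundary(I^n), basepoint None (the collapsed boundary);
  for n = 0 this is the two-point space S^0.\<close>
definition sphere_top :: "nat \<Rightarrow> (nat \<Rightarrow> real) option topology" where
  "sphere_top n = final_top (insert None (Some ` PiE {..<n} (\<lambda>_. {0<..<1})))
      (\<lambda>_::unit. product_topology (\<lambda>_. top_of_set {0..1::real}) {..<n})
      (\<lambda>_ x. if x \<in> PiE {..<n} (\<lambda>_. {0<..<1}) then Some x else None)"

definition susp_top :: "'a topology \<Rightarrow> 'a \<Rightarrow> ((nat \<Rightarrow> real) option \<times> 'a) topology" where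
  "susp_top X e = smash_top (sphere_top 1) None X e"

definition tri :: "('a \<Rightarrow> 'b multiset) \<Rightarrow> ('c \<Rightarrow> 'd multiset) \<Rightarrow> 'a \<times> 'c \<Rightarrow> ('b \<times> 'd) multiset" where
  "tri f g p = sum_mset (image_mset (\<lambda>b. image_mset (\<lambda>d. (b, d)) (g (snd p))) (f (fst p)))"

definition susp_mv :: "('a \<Rightarrow> 'b multiset) \<Rightarrow> (nat \<Rightarrow> real) option \<times> 'a \<Rightarrow> ((nat \<Rightarrow> real) option \<times> 'b) multiset" where
  "susp_mv f = tri (iota None) f"

definition sp_ext :: "('a \<Rightarrow> 'b multiset) \<Rightarrow> 'a multiset \<Rightarrow> 'b multiset" where
  "sp_ext \<alpha> M = sum_mset (image_mset \<alpha> M)"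

text \<open>f^* on representatives: alpha \<mapsto> ext(alpha) o f.\<close>
definition pull :: "('x \<Rightarrow> 'y multiset) \<Rightarrow> ('y \<Rightarrow> 'z multiset) \<Rightarrow> 'x \<Rightarrow> 'z multiset" where
  "pull f \<alpha> = sp_ext \<alpha> \<circ> f"

text \<open>Canonical homeomorphism S^1 \<and> S^n \<cong> S^(n+1) (I \<times> I^n = I^(n+1)).\<close>
definition sphere_smash_map :: "nat \<Rightarrow> (nat \<Rightarrow> real) option \<times> (nat \<Rightarrow> real) option \<Rightarrow> (nat \<Rightarrow> real) option" where
  "sphere_smash_map n p = (case p of
      (Some t, Some x) \<Rightarrow> Some (\<lambda>i. if i = 0 then t 0 else if i \<le> n then x (i - 1) else undefined)
    | _ \<Rightarrow> None)"

definition susp_iso :: "nat \<Rightarrow> ('a \<Rightarrow> (nat \<Rightarrow> real) option multiset) \<Rightarrow> (nat \<Rightarrow> real) option \<times> 'a \<Rightarrow> (nat \<Rightarrow> real) option multiset" where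
  "susp_iso n \<alpha> = image_mset (sphere_smash_map n) \<circ> susp_mv \<alpha>"

text \<open>The class [alpha] in reduced cohomology H^n(Z) = [Z, SP(S^n)]_* (based homotopy classes).\<close>
definition coh_class :: "'a topology \<Rightarrow> 'a \<Rightarrow> nat \<Rightarrow> ('a \<Rightarrow> (nat \<Rightarrow> real) option multiset) \<Rightarrow> ('a \<Rightarrow> (nat \<Rightarrow> real) option multiset) set" where
  "coh_class Z z n \<alpha> = {\<beta>. homotopic_with (\<lambda>h. h z = {#}) Z (SP_top (sphere_top n) None) \<alpha> \<beta>}"

end

theory Submission
  imports Defs
begin

text \<open>The identity already holds for representatives, not only for homotopy classes.
  Pulling back along a product is the product of the pull-backs,
  \<open>(g \<triangle> f)\<^sup>*(h \<triangle> \<beta>) = g\<^sup>*h \<triangle> f\<^sup>*\<beta>\<close>, since both sides are the double sum of all pairs;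
  moreover \<open>\<iota>\<^sup>*\<iota> = \<iota>\<close>, and pulling back commutes with post-composition by \<open>SP(\<phi>)\<close>
  for the homeomorphism \<open>\<phi> : S\<^sup>1 \<and> S\<^sup>n \<cong> S\<^sup>n\<^sup>+\<^sup>1\<close>.\<close>

lemma sum_mset_Union_mset:
  "(\<Sum>x\<in>#\<Sum>\<^sub># MM. g x) = (\<Sum>M\<in>#MM. \<Sum>x\<in>#M. g x)"
  by (induction MM) simp_all

lemma tri_Pair: "tri g f (a, c) = (\<Sum>b\<in>#g a. \<Sum>d\<in>#f c. {#(b, d)#})"
  by (simp add: tri_def)

lemma sp_ext_sum_mset: "sp_ext \<beta> (\<Sum>x\<in>#M. G x) = (\<Sum>x\<in>#M. sp_ext \<beta> (G x))"
  by (simp add: sp_ext_def sum_mset_Union_mset image_mset.compositionality comp_def)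

lemma sp_ext_image_mset: "sp_ext \<beta> (image_mset g M) = (\<Sum>x\<in>#M. \<beta> (g x))"
  by (simp add: sp_ext_def image_mset.compositionality comp_def)

lemma pull_tri: "pull (tri g f) (tri h \<beta>) = tri (pull g h) (pull f \<beta>)"
proof
  fix p :: "'a \<times> 'b"
  obtain a c where p: "p = (a, c)" by (cases p)
  have "pull (tri g f) (tri h \<beta>) (a, c)
      = (\<Sum>b\<in>#g a. \<Sum>d\<in>#f c. \<Sum>b'\<in>#h b. \<Sum>d'\<in>#\<beta> d. {#(b', d')#})"
    by (simp add: pull_def tri_Pair sp_ext_sum_mset sp_ext_image_mset)
  also have "\<dots> = (\<Sum>b\<in>#g a. \<Sum>b'\<in>#h b. \<Sum>d\<in>#f c. \<Sum>d'\<in>#\<beta> d. {#(b', d')#})"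
    by (simp only: sum_mset.swap[of _ "f c"])
  also have "\<dots> = tri (pull g h) (pull f \<beta>) (a, c)"
    by (simp add: pull_def sp_ext_def tri_Pair sum_mset_Union_mset image_mset.compositionality comp_def
        del: sum_mset_singleton_mset)
  finally show "pull (tri g f) (tri h \<beta>) p = tri (pull g h) (pull f \<beta>) p"
    by (simp add: p)
qed

lemma pull_iota_iota: "pull (iota e) (iota e) = iota e"
  by (simp add: fun_eq_iff pull_def iota_def sp_ext_def)

lemma pull_image_mset_comp: "pull F (image_mset \<phi> \<circ> \<beta>) = image_mset \<phi> \<circ> pull F \<beta>"
proof -
  have "sp_ext (image_mset \<phi> \<circ> \<beta>) M = image_mset \<phi> (sp_ext \<beta> M)" for M
    by (induction M) (simp_all add: sp_ext_def)
  then show ?thesis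
    by (simp add: fun_eq_iff pull_def)
qed

lemma pull_susp_mv_susp_iso: "pull (susp_mv f) (susp_iso n \<alpha>) = susp_iso n (pull f \<alpha>)"
  by (simp add: susp_iso_def susp_mv_def pull_image_mset_comp pull_tri pull_iota_iota)

theorem corollary1p4:
  fixes X :: "'a topology" and e :: 'a and Y :: "'b topology" and eY :: 'b
    and f :: "'a \<Rightarrow> 'b multiset" and n :: nat
    and \<alpha> :: "'b \<Rightarrow> (nat \<Rightarrow> real) option multiset"
  assumes "e \<in> topspace X" and "eY \<in> topspace Y"
    and "continuous_map X (SP_top Y eY) f" and "f e = {#}"
    and "continuous_map Y (SP_top (sphere_top n) None) \<alpha>" and "\<alpha> eY = {#}"
  shows "coh_class (susp_top X e) (None, e) (Suc n) (pull (susp_mv f) (susp_iso n \<alpha>))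
       = coh_class (susp_top X e) (None, e) (Suc n) (susp_iso n (pull f \<alpha>))"
  by (simp only: pull_susp_mv_susp_iso)

end
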